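(* Fix $n\in\mathbb N$ and suppose there is an algorithm for $n$ values in the discrete-time model that is $\alpha$-consistent and $\beta$-robust for the MaxProb objective. Then for every $K\in\mathbb N$ and every predicted prior $\tilde F$ supported on $[K]$ with $\tilde f(1)>0$, there exist real numbers $\{y_{t,\ell}\}_{t\in\{0,1,\dots,n\},\,\ell\in[K]}$ satisfying: (i) $y_{0,\ell}=1$ for all $\ell\in[K]$; (ii) $0\le y_{t,\ell}\le1$ for all $t\in[n],\ell\in[K]$; (iii) for all $t\in[n],\ell\in[K]$: $\Delta^t(\ell)\,y_{t,\ell}-\Delta^{t-1}(\ell)\tilde F(\ell-1)\,y_{t-1,\ell}\ge0$; (iv) for all $t\in[n],\ell\in[K]$: $\Delta^t(\ell)\,y_{t,\ell}-\Delta^{t-1}(\ell)\tilde F(\ell-1)\,y_{t-1,\ell}\le\sum_{m\in[\ell]}\Delta^{t-1}(m)\,\tilde f(\ell)\,y_{t-1,m}$; (v) $\displaystyle\sum_{t\in[n]}\sum_{\ell\in[K]}\tilde F(\ell)^{n-t}\Big(\sum_{m\in[\ell]}\Delta^{t-1}(m)\tilde f(\ell)y_{t-1,m}+\Delta^{t-1}(\ell)\tilde F(\ell-1)y_{t-1,\ell}-\Delta^t(\ell)y_{t,\ell}\Big)\ge\alpha$; (vi) for all $k\in[K]$: $\displaystyle\sum_{t\in[n]}\sum_{\ell\in[k]}\frac{\tilde F(\ell)^{n-t}}{\tilde F(k)^n}\Big(\sum_{m\in[\ell]}\Delta^{t-1}(m)\tilde f(\ell)y_{t-1,m}+\Delta^{t-1}(\ell)\tilde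 F(\ell-1)y_{t-1,\ell}-\Delta^t(\ell)y_{t,\ell}\Big)\ge\beta$.
   Context: Discrete-time model: $n$ values $x_1,\dots,x_n$ are drawn i.i.d. from an unknown prior $F$ (a distribution on $[0,\infty)$, possibly discrete) and revealed in the order $x_1,x_2,\dots,x_n$; upon seeing $x_t$ an online algorithm (knowing $n$, a predicted prior $\tilde F$, the values seen so far, and internal randomness) must irrevocably accept or reject it; at most one value is accepted. MaxProb with the all-ties-win convention: the algorithm succeeds if the accepted value equals $\max_i x_i$. The competitive ratio is the success probability; $\alpha$-consistent means $\alpha$-competitive for every $F$ when $\tilde F=F$; $\beta$-robust means $\beta$-competitive for every $F$ and every $\tilde F$. Here $[K]=\{1,\dots,K\}$, $\tilde F$ is a distribution on $[K]$ with cdf $\tilde F$ (with $\tilde F(0)=0$) and pmf $\tilde f$. For $t\in[n]$, $\Delta^t(\ell)=\tilde F(\ell)^t-\tilde F(\ell-1)^t$, and $\Delta^0(\ell)=1$ if $\ell=1$ and $0$ otherwise. *)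

theory Defs
  imports "HOL-Probability.Probability"
begin

definition prior :: "real measure \<Rightarrow> bool" where
  "prior F \<longleftrightarrow> prob_space F \<and> sets F = sets borel \<and> (AE x in F. 0 \<le> x)"

text \<open>A (randomized) online algorithm for n values in behavioural form:
  A Ft t x is the probability of accepting the value x t (0-indexed step t),
  given the predicted prior Ft and that nothing was accepted before; it may only
  depend on x 0, ..., x t (non-anticipation) and must be measurable.\<close>
definition online_alg :: "nat \<Rightarrow> (real measure \<Rightarrow> nat \<Rightarrow> (nat \<Rightarrow> real) \<Rightarrow> real) \<Rightarrow> bool" where
  "online_alg n A \<longleftrightarrow>
     (\<forall>Ft t x. 0 \<le> A Ft t x \<and> A Ft t x \<le> 1) \<and>
     (\<forall>Ft t x x'. (\<forall>i\<le>t. x i = x' i) \<longrightarrow> A Ft t x = A Ft t x') \<and>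
     (\<forall>Ft t. A Ft t \<in> borel_measurable (PiM {..<n} (\<lambda>_. borel)))"

definition success_prob ::
  "nat \<Rightarrow> (real measure \<Rightarrow> nat \<Rightarrow> (nat \<Rightarrow> real) \<Rightarrow> real) \<Rightarrow> real measure \<Rightarrow> real measure \<Rightarrow> real" where
  "success_prob n A Ft F =
     (\<integral>x. (\<Sum>t<n. (\<Prod>s<t. 1 - A Ft s x) * A Ft t x *
              (if x t = Max (x ` {..<n}) then 1 else 0)) \<partial>(PiM {..<n} (\<lambda>_. F)))"

definition consistent :: "nat \<Rightarrow> (real measure \<Rightarrow> nat \<Rightarrow> (nat \<Rightarrow> real) \<Rightarrow> real) \<Rightarrow> real \<Rightarrow> bool" where
  "consistent n A \<alpha> \<longleftrightarrow> (\<forall>F. prior F \<longrightarrow> success_prob n A F F \<ge> \<alpha>)"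

definition robust :: "nat \<Rightarrow> (real measure \<Rightarrow> nat \<Rightarrow> (nat \<Rightarrow> real) \<Rightarrow> real) \<Rightarrow> real \<Rightarrow> bool" where
  "robust n A \<beta> \<longleftrightarrow> (\<forall>F Ft. prior F \<longrightarrow> prior Ft \<longrightarrow> success_prob n A Ft F \<ge> \<beta>)"

definition cdfP :: "real measure \<Rightarrow> nat \<Rightarrow> real" where
  "cdfP Ft l = measure Ft {..real l}"

definition pmfP :: "real measure \<Rightarrow> nat \<Rightarrow> real" where
  "pmfP Ft l = measure Ft {real l}"

definition Delta :: "real measure \<Rightarrow> nat \<Rightarrow> nat \<Rightarrow> real" where
  "Delta Ft t l = (if t = 0 then (if l = 1 then 1 else 0)
                   else cdfP Ft l ^ t - cdfP Ft (l - 1) ^ t)"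

end

theory Submission
  imports Defs
begin

text \<open>
  All values lie in {1..K}, so every probability involved is a finite sum over value sequences.
  Accepting a value that is not a record (a prefix maximum) never wins, so restricting the
  algorithm to records can only increase its success probability. For the restricted algorithm
  Delta^t(l) y_{t,l} is the probability of still running after t steps with running maximum l.
  A value below the current maximum is never accepted, which gives (iii); the bracket in
  (iv)-(vi) is the probability of stopping at step t on the value l, hence nonnegative.
  Stopping on l at step t wins iff the remaining n - t values are at most l, so consistency
  gives (v), and robustness, applied to the prior conditioned on values at most k, gives (vi).
\<close>

(* These rewrite indicator sums into sums over subsets, destroying the product form used throughout. *)
declare sum_mult_of_bool_eq [simp del] sum_of_bool_mult_eq [simp del] sum_of_bool_eq [simp del]

section \<open>Finite product measures and sums over value sequences\<close>

lemma finite_product_prob_space_power: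
  fixes n :: nat
  assumes "prob_space F"
  shows "finite_product_prob_space (\<lambda>_. F) {..<n}"
  using assms prob_space_imp_sigma_finite[OF assms]
  by (simp add: finite_product_prob_space_def finite_product_sigma_finite_def
      finite_product_sigma_finite_axioms_def product_sigma_finite_def product_prob_space_def
      product_prob_space_axioms_def)

lemma measure_PiM_singleton:
  fixes F :: "real measure" and n :: nat
  assumes F: "prob_space F" "sets F = sets borel" and a: "a \<in> extensional {..<n}"
  shows "{a} \<in> sets (PiM {..<n} (\<lambda>_. F))"
    and "measure (PiM {..<n} (\<lambda>_. F)) {a} = (\<Prod>i<n. measure F {a i})"
proof -
  interpret pF: prob_space F by (rule F(1))
  interpret fp: finite_product_prob_space "\<lambda>_. F" "{..<n}"
    by (rule finite_product_prob_space_power[OF F(1)])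
  have box: "{a} = PiE {..<n} (\<lambda>i. {a i})"
    using a by (rule PiE_singleton[symmetric])
  show "{a} \<in> sets (PiM {..<n} (\<lambda>_. F))"
    unfolding box using F(2) by (intro sets_PiM_I_finite) auto
  have "emeasure (PiM {..<n} (\<lambda>_. F)) {a} = (\<Prod>i<n. emeasure F {a i})"
    unfolding box using F(2) by (subst fp.measure_times) auto
  then show "measure (PiM {..<n} (\<lambda>_. F)) {a} = (\<Prod>i<n. measure F {a i})"
    by (simp add: fp.emeasure_eq_measure pF.emeasure_eq_measure prod_ennreal prod_nonneg)
qed

lemma integral_PiM_finite_support:
  fixes F :: "real measure" and R :: "real set" and g :: "(nat \<Rightarrow> real) \<Rightarrow> real"
  assumes F: "prob_space F" "sets F = sets borel" and R: "finite R" "measure F R = 1"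
    and g: "g \<in> borel_measurable (PiM {..<n} (\<lambda>_. borel))"
  shows "(\<integral>x. g x \<partial>PiM {..<n} (\<lambda>_. F)) = (\<Sum>x\<in>PiE {..<n} (\<lambda>_. R). g x * (\<Prod>i<n. measure F {x i}))"
proof -
  interpret pF: prob_space F by (rule F(1))
  interpret fp: finite_product_prob_space "\<lambda>_. F" "{..<n}"
    by (rule finite_product_prob_space_power[OF F(1)])
  let ?P = "PiM {..<n} (\<lambda>_. F)"
  let ?E = "PiE {..<n} (\<lambda>_. R)"
  have R_sets: "R \<in> sets F" using R(1) F(2) by (simp add: finite_imp_closed)
  have "sets ?P = sets (PiM {..<n} (\<lambda>_. borel))"
    by (rule sets_PiM_cong) (auto simp: F(2))
  then have g_meas: "g \<in> borel_measurable ?P" using g measurable_cong_sets by blast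
  have E_sets: "?E \<in> sets ?P" using R_sets by (intro sets_PiM_I_finite) auto
  have "emeasure ?P ?E = (\<Prod>i<n. emeasure F R)"
    using R_sets by (subst fp.measure_times) auto
  then have "emeasure ?P ?E = 1" using R(2) pF.emeasure_eq_measure by simp
  then have AE: "AE x in ?P. x \<in> ?E"
    using fp.AE_in_set_eq_1[OF E_sets] fp.emeasure_eq_measure by simp
  have "(\<integral>x. g x \<partial>?P) = (\<integral>x. g x * indicator ?E x \<partial>?P)"
    by (rule integral_cong_AE) (use g_meas E_sets AE in auto)
  also have "\<dots> = (\<Sum>a\<in>?E. g a * measure ?P {a})"
  proof (rule integral_indicator_finite_real)
    show "finite ?E" using R(1) by (simp add: finite_PiE)
    fix a assume "a \<in> ?E"
    then show "{a} \<in> sets ?P" by (intro measure_PiM_singleton(1)[OF F]) (simp add: PiE_iff)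
    show "emeasure ?P {a} < \<infinity>" by (simp add: fp.emeasure_eq_measure)
  qed
  also have "\<dots> = (\<Sum>a\<in>?E. g a * (\<Prod>i<n. measure F {a i}))"
    by (intro sum.cong refl) (simp add: measure_PiM_singleton(2)[OF F] PiE_iff)
  finally show ?thesis .
qed

lemma sum_PiE_lessThan_Suc:
  assumes "finite V"
  shows "(\<Sum>x\<in>PiE {..<Suc m} (\<lambda>_. V). G x) = (\<Sum>x\<in>PiE {..<m} (\<lambda>_. V). \<Sum>v\<in>V. G (x(m:=v)))"
proof -
  have "(\<Sum>x\<in>PiE {..<Suc m} (\<lambda>_. V). G x)
      = (\<Sum>x\<in>(\<lambda>(v, y). y(m := v)) ` (V \<times> PiE {..<m} (\<lambda>_. V)). G x)"
    by (simp add: lessThan_Suc PiE_insert_eq)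
  also have "\<dots> = (\<Sum>(v, x)\<in>V \<times> PiE {..<m} (\<lambda>_. V). G (x(m:=v)))"
    by (subst sum.reindex[OF inj_combinator]) (auto simp: case_prod_unfold)
  also have "\<dots> = (\<Sum>x\<in>PiE {..<m} (\<lambda>_. V). \<Sum>v\<in>V. G (x(m:=v)))"
    by (subst sum.cartesian_product[symmetric]) (rule sum.swap)
  finally show ?thesis .
qed

definition prefix_weight :: "(real \<Rightarrow> real) \<Rightarrow> nat \<Rightarrow> (nat \<Rightarrow> real) \<Rightarrow> real" where
  "prefix_weight p t x = (\<Prod>i<t. p (x i))"

lemma prefix_weight_upd_Suc: "prefix_weight p (Suc m) (x(m:=v)) = prefix_weight p m x * p v"
proof -
  have "(\<Prod>i<m. p ((x(m:=v)) i)) = (\<Prod>i<m. p (x i))" by (intro prod.cong) auto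
  then show ?thesis unfolding prefix_weight_def by simp
qed

lemma prefix_weight_nonneg:
  "(\<And>v. v \<in> V \<Longrightarrow> 0 \<le> p v) \<Longrightarrow> x \<in> PiE {..<t} (\<lambda>_. V) \<Longrightarrow> 0 \<le> prefix_weight p t x"
  unfolding prefix_weight_def by (intro prod_nonneg) (auto simp: PiE_iff)

lemma sum_prefix_weight_all:
  assumes "finite V"
  shows "(\<Sum>x\<in>PiE {..<t} (\<lambda>_. V). prefix_weight p t x * of_bool (\<forall>i<t. P (x i)))
       = (\<Sum>v\<in>V. p v * of_bool (P v)) ^ t"
proof (induction t)
  case 0
  then show ?case by (simp add: prefix_weight_def)
next
  case (Suc t)
  have "(\<forall>i<Suc t. P ((x(t:=v)) i)) \<longleftrightarrow> (\<forall>i<t. P (x i)) \<and> P v" for x v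
    by (auto simp: less_Suc_eq)
  then have "(\<Sum>x\<in>PiE {..<Suc t} (\<lambda>_. V). prefix_weight p (Suc t) x * of_bool (\<forall>i<Suc t. P (x i)))
     = (\<Sum>x\<in>PiE {..<t} (\<lambda>_. V). \<Sum>v\<in>V.
          (prefix_weight p t x * of_bool (\<forall>i<t. P (x i))) * (p v * of_bool (P v)))"
    by (simp add: sum_PiE_lessThan_Suc[OF assms] prefix_weight_upd_Suc of_bool_conj mult_ac)
  also have "\<dots> = (\<Sum>x\<in>PiE {..<t} (\<lambda>_. V). prefix_weight p t x * of_bool (\<forall>i<t. P (x i)))
                 * (\<Sum>v\<in>V. p v * of_bool (P v))"
    by (rule sum_product[symmetric])
  finally show ?case using Suc by simp
qed

lemma prod_of_bool: "finite S \<Longrightarrow> (\<Prod>j\<in>S. of_bool (P j)) = (of_bool (\<forall>j\<in>S. P j) :: 'a::comm_semiring_1)"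
  by (induction S rule: finite_induct) auto

lemma sum_of_bool_max_eq:
  fixes V :: "real set" and p :: "real \<Rightarrow> real"
  assumes "finite V"
  shows "(\<Sum>v\<in>V. p v * of_bool (max M v = c)) =
     of_bool (M = c) * (\<Sum>v\<in>V. p v * of_bool (v < c)) + of_bool (M \<le> c) * (if c \<in> V then p c else 0)"
proof -
  have split_max: "of_bool (max M v = c) = of_bool (M = c) * of_bool (v < c) + of_bool (M \<le> c) * (of_bool (v = c) :: real)"
    for v by (auto simp: max_def)
  have "(\<Sum>v\<in>V. p v * of_bool (max M v = c))
       = of_bool (M = c) * (\<Sum>v\<in>V. p v * of_bool (v < c)) + of_bool (M \<le> c) * (\<Sum>v\<in>V. p v * of_bool (v = c))"
    unfolding split_max
    by (simp add: sum.distrib sum_distrib_left algebra_simps split del: split_of_bool)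
  also have "(\<Sum>v\<in>V. p v * of_bool (v = c)) = (if c \<in> V then p c else 0)"
    using assms by (simp add: of_bool_def if_distrib[of "(*) _"] sum.delta' cong: if_cong)
  finally show ?thesis .
qed

lemma sum_prefix_weight_tail:
  assumes fin: "finite V" and Tm: "T \<le> m"
    and H: "\<And>x j v. T \<le> j \<Longrightarrow> H (x(j:=v)) = H x"
    and C: "\<And>x j v. T \<le> j \<Longrightarrow> C (x(j:=v)) = C x"
  shows "(\<Sum>x\<in>PiE {..<m} (\<lambda>_. V). prefix_weight p m x * H x * (\<Prod>j\<in>{T..<m}. of_bool (x j \<le> C x)))
       = (\<Sum>x\<in>PiE {..<T} (\<lambda>_. V). prefix_weight p T x * H x * (\<Sum>v\<in>V. p v * of_bool (v \<le> C x)) ^ (m - T))"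
  using Tm H
proof (induction m arbitrary: H rule: dec_induct)
  case base
  then show ?case by simp
next
  case (step m)
  let ?G = "\<lambda>x. \<Sum>v\<in>V. p v * of_bool (v \<le> C x)"
  have C_upd: "C (x(m:=v)) = C x" and H_upd: "H (x(m:=v)) = H x" for x v
    using C step.hyps step.prems by blast+
  have step_term: "prefix_weight p (Suc m) (x(m:=v)) * H (x(m:=v))
        * (\<Prod>j\<in>{T..<Suc m}. of_bool ((x(m:=v)) j \<le> C (x(m:=v))))
      = prefix_weight p m x * H x * (\<Prod>j\<in>{T..<m}. of_bool (x j \<le> C x)) * (p v * of_bool (v \<le> C x))"
    for x v
  proof -
    have "(\<Prod>j\<in>{T..<m}. of_bool ((x(m:=v)) j \<le> C (x(m:=v)))) = (\<Prod>j\<in>{T..<m}. of_bool (x j \<le> C x) :: real)"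
      using C_upd by (intro prod.cong) auto
    then show ?thesis
      using step.hyps by (simp add: prod.atLeastLessThan_Suc prefix_weight_upd_Suc C_upd H_upd mult_ac)
  qed
  have "(\<Sum>x\<in>PiE {..<Suc m} (\<lambda>_. V). prefix_weight p (Suc m) x * H x * (\<Prod>j\<in>{T..<Suc m}. of_bool (x j \<le> C x)))
    = (\<Sum>x\<in>PiE {..<m} (\<lambda>_. V). \<Sum>v\<in>V.
         prefix_weight p m x * H x * (\<Prod>j\<in>{T..<m}. of_bool (x j \<le> C x)) * (p v * of_bool (v \<le> C x)))"
    by (simp only: sum_PiE_lessThan_Suc[OF fin] step_term)
  also have "\<dots> = (\<Sum>x\<in>PiE {..<m} (\<lambda>_. V). prefix_weight p m x * (H x * ?G x) * (\<Prod>j\<in>{T..<m}. of_bool (x j \<le> C x)))"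
    by (simp add: sum_distrib_left mult_ac)
  also have "\<dots> = (\<Sum>x\<in>PiE {..<T} (\<lambda>_. V). prefix_weight p T x * (H x * ?G x) * ?G x ^ (m - T))"
    by (rule step.IH) (simp only: step.prems C)
  also have "\<dots> = (\<Sum>x\<in>PiE {..<T} (\<lambda>_. V). prefix_weight p T x * H x * ?G x ^ (Suc m - T))"
    using step.hyps by (intro sum.cong refl) (simp add: Suc_diff_le)
  finally show ?case .
qed

section \<open>Record-restricted algorithms\<close>

definition non_anticipating :: "(nat \<Rightarrow> (nat \<Rightarrow> real) \<Rightarrow> real) \<Rightarrow> bool" where
  "non_anticipating a \<longleftrightarrow> (\<forall>t x x'. (\<forall>i\<le>t. x i = x' i) \<longrightarrow> a t x = a t x')"

definition unit_valued :: "(nat \<Rightarrow> (nat \<Rightarrow> real) \<Rightarrow> real) \<Rightarrow> bool" where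
  "unit_valued a \<longleftrightarrow> (\<forall>t x. 0 \<le> a t x \<and> a t x \<le> 1)"

lemma online_algD:
  assumes "online_alg n A"
  shows "unit_valued (A Ft)" "non_anticipating (A Ft)"
    and "\<And>t. A Ft t \<in> borel_measurable (PiM {..<n} (\<lambda>_. borel))"
  using assms unfolding online_alg_def unit_valued_def non_anticipating_def by blast+

definition record_accept :: "(nat \<Rightarrow> (nat \<Rightarrow> real) \<Rightarrow> real) \<Rightarrow> nat \<Rightarrow> (nat \<Rightarrow> real) \<Rightarrow> real" where
  "record_accept a s x = (if \<forall>i<s. x i \<le> x s then a s x else 0)"

definition survival :: "(nat \<Rightarrow> (nat \<Rightarrow> real) \<Rightarrow> real) \<Rightarrow> nat \<Rightarrow> (nat \<Rightarrow> real) \<Rightarrow> real" where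
  "survival a t x = (\<Prod>s<t. 1 - record_accept a s x)"

text \<open>All values are at least 1, so 1 serves as the maximum of the empty prefix;
  this matches the convention for Delta at time 0.\<close>
definition running_max :: "nat \<Rightarrow> (nat \<Rightarrow> real) \<Rightarrow> real" where
  "running_max t x = Max (insert 1 (x ` {..<t}))"

lemma record_accept_upd:
  assumes "non_anticipating a" "s < m"
  shows "record_accept a s (x(m:=v)) = record_accept a s x"
proof -
  have "a s (x(m:=v)) = a s x"
    using assms unfolding non_anticipating_def by (metis fun_upd_other leD le_less_trans)
  then show ?thesis using assms(2) unfolding record_accept_def by auto
qed

lemma survival_upd: "non_anticipating a \<Longrightarrow> t \<le> m \<Longrightarrow> survival a t (x(m:=v)) = survival a t x"
  unfolding survival_def by (intro prod.cong refl) (simp add: record_accept_upd)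

lemma survival_Suc: "survival a (Suc t) x = survival a t x * (1 - record_accept a t x)"
  unfolding survival_def by simp

lemma record_accept_nonneg: "unit_valued a \<Longrightarrow> 0 \<le> record_accept a s x"
  unfolding unit_valued_def record_accept_def by auto

lemma record_accept_le_1: "unit_valued a \<Longrightarrow> record_accept a s x \<le> 1"
  unfolding unit_valued_def record_accept_def by auto

lemma survival_nonneg: "unit_valued a \<Longrightarrow> 0 \<le> survival a t x"
  unfolding survival_def by (intro prod_nonneg) (auto simp: record_accept_le_1)

lemma survival_le_1: "unit_valued a \<Longrightarrow> survival a t x \<le> 1"
  unfolding survival_def by (intro prod_le_1) (auto simp: record_accept_le_1 record_accept_nonneg)

lemma record_accept_nonzero_imp_record: "record_accept a s x \<noteq> 0 \<Longrightarrow> \<forall>i<s. x i \<le> x s"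
  unfolding record_accept_def by (auto split: if_splits)

lemma running_max_upd_Suc: "running_max (Suc m) (x(m:=v)) = max (running_max m x) v"
proof -
  have "(x(m:=v)) ` {..<Suc m} = insert v (x ` {..<m})"
    by (auto simp: lessThan_Suc image_iff)
  moreover have "Max (insert 1 (insert v (x ` {..<m}))) = max v (Max (insert 1 (x ` {..<m})))"
    by (subst insert_commute) (rule Max_insert, auto)
  ultimately show ?thesis unfolding running_max_def by (simp add: max.commute)
qed

lemma running_max_le_iff: "running_max t x \<le> c \<longleftrightarrow> 1 \<le> c \<and> (\<forall>i<t. x i \<le> c)"
  unfolding running_max_def by (subst Max_le_iff) auto

lemma running_max_in: "running_max t x \<in> insert 1 (x ` {..<t})"
  unfolding running_max_def by (rule Max_in) auto

lemma running_max_le_of_record_accept: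
  assumes "record_accept a m (x(m:=v)) \<noteq> 0" "1 \<le> v"
  shows "running_max m x \<le> v"
  using record_accept_nonzero_imp_record[OF assms(1)] assms(2) by (simp add: running_max_le_iff)

definition success_integrand :: "nat \<Rightarrow> (nat \<Rightarrow> (nat \<Rightarrow> real) \<Rightarrow> real) \<Rightarrow> (nat \<Rightarrow> real) \<Rightarrow> real" where
  "success_integrand n a x =
     (\<Sum>t<n. (\<Prod>s<t. 1 - a s x) * a t x * (if x t = Max (x ` {..<n}) then 1 else 0))"

lemma success_prob_eq_integral:
  "success_prob n A Ft F = (\<integral>x. success_integrand n (A Ft) x \<partial>PiM {..<n} (\<lambda>_. F))"
  unfolding success_prob_def success_integrand_def ..

lemma is_max_indicator_measurable:
  "(t::nat) < n \<Longrightarrow> (\<lambda>x::nat\<Rightarrow>real. if x t = Max (x ` {..<n}) then 1 else 0::real)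
     \<in> borel_measurable (PiM {..<n} (\<lambda>_. borel))"
  by measurable

lemma success_integrand_measurable:
  assumes "\<And>t. a t \<in> borel_measurable (PiM {..<n} (\<lambda>_. borel))"
  shows "success_integrand n a \<in> borel_measurable (PiM {..<n} (\<lambda>_. borel))"
  unfolding success_integrand_def
  by (intro borel_measurable_sum borel_measurable_times borel_measurable_prod borel_measurable_diff
      borel_measurable_const assms is_max_indicator_measurable) auto

lemma success_integrand_le_record:
  assumes "unit_valued a"
  shows "success_integrand n a x
           \<le> (\<Sum>t<n. survival a t x * record_accept a t x * of_bool (\<forall>i<n. x i \<le> x t))"
  unfolding success_integrand_def
proof (rule sum_mono)
  fix t assume t: "t \<in> {..<n}"
  show "(\<Prod>s<t. 1 - a s x) * a t x * (if x t = Max (x ` {..<n}) then 1 else 0)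
          \<le> survival a t x * record_accept a t x * of_bool (\<forall>i<n. x i \<le> x t)"
  proof (cases "x t = Max (x ` {..<n})")
    case True
    then have all_le: "\<forall>i<n. x i \<le> x t" by (metis Max_ge finite_imageI finite_lessThan image_eqI lessThan_iff)
    then have "record_accept a t x = a t x" using t unfolding record_accept_def by auto
    moreover have "(\<Prod>s<t. 1 - a s x) \<le> survival a t x" unfolding survival_def
      by (intro prod_mono) (use assms in \<open>auto simp: unit_valued_def record_accept_def\<close>)
    ultimately show ?thesis using True all_le assms by (simp add: unit_valued_def mult_right_mono)
  qed (simp add: survival_nonneg record_accept_nonneg assms)
qed

lemma record_success_eq_tail:
  assumes "t < n"
  shows "record_accept a t x * of_bool (\<forall>i<n. x i \<le> x t)
       = record_accept a t x * (\<Prod>j\<in>{Suc t..<n}. of_bool (x j \<le> x t))"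
proof (cases "record_accept a t x = 0")
  case False
  then have "\<forall>i<t. x i \<le> x t" by (rule record_accept_nonzero_imp_record)
  then have "(\<forall>i<n. x i \<le> x t) \<longleftrightarrow> (\<forall>j\<in>{Suc t..<n}. x j \<le> x t)"
    using assms by (metis atLeastLessThan_iff lessThan_iff linorder_neqE_nat order_refl
        Suc_leI lessThan_subset_iff subsetD)
  then show ?thesis by (simp add: prod_of_bool)
qed simp

lemma sum_record_success_eq:
  assumes fin: "finite V" and na: "non_anticipating a"
  shows "(\<Sum>x\<in>PiE {..<n} (\<lambda>_. V). prefix_weight p n x *
            (\<Sum>t<n. survival a t x * record_accept a t x * of_bool (\<forall>i<n. x i \<le> x t)))
   = (\<Sum>t<n. \<Sum>x\<in>PiE {..<Suc t} (\<lambda>_. V). prefix_weight p (Suc t) x * (survival a t x * record_accept a t x)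
              * (\<Sum>v\<in>V. p v * of_bool (v \<le> x t)) ^ (n - Suc t))"
proof -
  have "(\<Sum>x\<in>PiE {..<n} (\<lambda>_. V). prefix_weight p n x *
            (\<Sum>t<n. survival a t x * record_accept a t x * of_bool (\<forall>i<n. x i \<le> x t)))
     = (\<Sum>t<n. \<Sum>x\<in>PiE {..<n} (\<lambda>_. V). prefix_weight p n x * (survival a t x * record_accept a t x)
          * (\<Prod>j\<in>{Suc t..<n}. of_bool (x j \<le> x t)))"
    unfolding sum_distrib_left
  proof (subst sum.swap, intro sum.cong refl)
    fix t x assume "t \<in> {..<n}"
    then show "prefix_weight p n x * (survival a t x * record_accept a t x * of_bool (\<forall>i<n. x i \<le> x t))
        = prefix_weight p n x * (survival a t x * record_accept a t x) * (\<Prod>j\<in>{Suc t..<n}. of_bool (x j \<le> x t))"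
      using record_success_eq_tail[of t n a x] by (simp only: lessThan_iff mult.assoc)
  qed
  also have "\<dots> = (\<Sum>t<n. \<Sum>x\<in>PiE {..<Suc t} (\<lambda>_. V). prefix_weight p (Suc t) x
                     * (survival a t x * record_accept a t x) * (\<Sum>v\<in>V. p v * of_bool (v \<le> x t)) ^ (n - Suc t))"
  proof (rule sum.cong[OF refl], rule sum_prefix_weight_tail[OF fin])
    fix t x j v assume "t \<in> {..<n}" "Suc t \<le> j"
    then show "survival a t (x(j:=v)) * record_accept a t (x(j:=v)) = survival a t x * record_accept a t x"
      and "(x(j:=v)) t = x t"
      by (simp_all add: survival_upd[OF na] record_accept_upd[OF na])
  qed simp
  finally show ?thesis .
qed

lemma success_prob_le_record_sum:
  fixes F :: "real measure" and q :: "real \<Rightarrow> real"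
  assumes F: "prob_space F" "sets F = sets borel" "measure F V = 1"
    and fin: "finite V" and q: "\<And>v. v \<in> V \<Longrightarrow> measure F {v} = q v"
    and a: "unit_valued (A Ft)" "non_anticipating (A Ft)"
    and meas: "\<And>t. A Ft t \<in> borel_measurable (PiM {..<n} (\<lambda>_. borel))"
  shows "success_prob n A Ft F
    \<le> (\<Sum>t<n. \<Sum>x\<in>PiE {..<Suc t} (\<lambda>_. V). prefix_weight q (Suc t) x
          * (survival (A Ft) t x * record_accept (A Ft) t x) * (\<Sum>v\<in>V. q v * of_bool (v \<le> x t)) ^ (n - Suc t))"
proof -
  let ?a = "A Ft"
  have q_nonneg: "\<And>v. v \<in> V \<Longrightarrow> 0 \<le> q v" using q by (metis measure_nonneg)
  have "success_prob n A Ft F = (\<Sum>x\<in>PiE {..<n} (\<lambda>_. V). success_integrand n ?a x * (\<Prod>i<n. measure F {x i}))"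
    unfolding success_prob_eq_integral
    by (rule integral_PiM_finite_support[OF F(1,2) fin F(3) success_integrand_measurable[OF meas]])
  also have "\<dots> = (\<Sum>x\<in>PiE {..<n} (\<lambda>_. V). prefix_weight q n x * success_integrand n ?a x)"
  proof (rule sum.cong[OF refl])
    fix x assume "x \<in> PiE {..<n} (\<lambda>_. V)"
    then have "(\<Prod>i<n. measure F {x i}) = prefix_weight q n x"
      unfolding prefix_weight_def by (intro prod.cong refl) (auto simp: q PiE_iff)
    then show "success_integrand n ?a x * (\<Prod>i<n. measure F {x i}) = prefix_weight q n x * success_integrand n ?a x"
      by simp
  qed
  also have "\<dots> \<le> (\<Sum>x\<in>PiE {..<n} (\<lambda>_. V). prefix_weight q n x *
                   (\<Sum>t<n. survival ?a t x * record_accept ?a t x * of_bool (\<forall>i<n. x i \<le> x t)))"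
    by (intro sum_mono mult_left_mono success_integrand_le_record[OF a(1)] prefix_weight_nonneg[OF q_nonneg])
  also have "\<dots> = (\<Sum>t<n. \<Sum>x\<in>PiE {..<Suc t} (\<lambda>_. V). prefix_weight q (Suc t) x
          * (survival ?a t x * record_accept ?a t x) * (\<Sum>v\<in>V. q v * of_bool (v \<le> x t)) ^ (n - Suc t))"
    by (rule sum_record_success_eq[OF fin a(2)])
  finally show ?thesis .
qed

text \<open>Under point masses p, the probabilities that the record-restricted algorithm is still
  running after t steps with running maximum c, resp. stops on the value x t = c
  (steps are counted from 0).\<close>
definition alive :: "real set \<Rightarrow> (real \<Rightarrow> real) \<Rightarrow> (nat \<Rightarrow> (nat \<Rightarrow> real) \<Rightarrow> real) \<Rightarrow> nat \<Rightarrow> real \<Rightarrow> real" where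
  "alive V p a t c = (\<Sum>x\<in>PiE {..<t} (\<lambda>_. V).
     prefix_weight p t x * survival a t x * of_bool (running_max t x = c))"

definition stop_at :: "real set \<Rightarrow> (real \<Rightarrow> real) \<Rightarrow> (nat \<Rightarrow> (nat \<Rightarrow> real) \<Rightarrow> real) \<Rightarrow> nat \<Rightarrow> real \<Rightarrow> real" where
  "stop_at V p a t c = (\<Sum>x\<in>PiE {..<Suc t} (\<lambda>_. V).
     prefix_weight p (Suc t) x * (survival a t x * record_accept a t x) * of_bool (x t = c))"

lemma alive_0: "alive V p a 0 c = of_bool (c = 1)"
  by (auto simp: alive_def prefix_weight_def survival_def running_max_def PiE_empty_domain)

lemma alive_nonneg:
  "unit_valued a \<Longrightarrow> (\<And>v. v \<in> V \<Longrightarrow> 0 \<le> p v) \<Longrightarrow> 0 \<le> alive V p a t c"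
  unfolding alive_def
  by (intro sum_nonneg mult_nonneg_nonneg prefix_weight_nonneg survival_nonneg) auto

lemma stop_at_nonneg:
  "unit_valued a \<Longrightarrow> (\<And>v. v \<in> V \<Longrightarrow> 0 \<le> p v) \<Longrightarrow> 0 \<le> stop_at V p a t c"
  unfolding stop_at_def
  by (intro sum_nonneg mult_nonneg_nonneg prefix_weight_nonneg survival_nonneg record_accept_nonneg) auto

lemma alive_Suc_expand:
  assumes "finite V" "non_anticipating a"
  shows "alive V p a (Suc u) c = (\<Sum>x\<in>PiE {..<u} (\<lambda>_. V). \<Sum>v\<in>V. prefix_weight p u x * p v * survival a u x
           * (1 - record_accept a u (x(u:=v))) * of_bool (max (running_max u x) v = c))"
  unfolding alive_def sum_PiE_lessThan_Suc[OF assms(1)]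
  by (simp only: prefix_weight_upd_Suc survival_Suc survival_upd[OF assms(2) order_refl]
      running_max_upd_Suc mult_ac)

lemma stop_at_eq:
  assumes "finite V" "non_anticipating a"
  shows "stop_at V p a u c = (\<Sum>x\<in>PiE {..<u} (\<lambda>_. V). \<Sum>v\<in>V.
           prefix_weight p u x * p v * survival a u x * record_accept a u (x(u:=v)) * of_bool (v = c))"
  unfolding stop_at_def sum_PiE_lessThan_Suc[OF assms(1)]
  by (simp only: prefix_weight_upd_Suc survival_upd[OF assms(2) order_refl] fun_upd_same mult_ac)

lemma alive_Suc_ge:
  assumes fin: "finite V" and V1: "\<And>v. v \<in> V \<Longrightarrow> 1 \<le> v" and a: "non_anticipating a" "unit_valued a"
    and p0: "\<And>v. v \<in> V \<Longrightarrow> 0 \<le> p v"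
  shows "alive V p a u c * (\<Sum>v\<in>V. p v * of_bool (v < c)) \<le> alive V p a (Suc u) c"
proof -
  have "alive V p a u c * (\<Sum>v\<in>V. p v * of_bool (v < c)) = (\<Sum>x\<in>PiE {..<u} (\<lambda>_. V). \<Sum>v\<in>V.
      prefix_weight p u x * p v * survival a u x * (of_bool (running_max u x = c) * of_bool (v < c)))"
    unfolding alive_def sum_product
    by (intro sum.cong refl) (simp only: mult_ac)
  also have "\<dots> \<le> (\<Sum>x\<in>PiE {..<u} (\<lambda>_. V). \<Sum>v\<in>V. prefix_weight p u x * p v * survival a u x
           * (1 - record_accept a u (x(u:=v))) * of_bool (max (running_max u x) v = c))"
  proof (intro sum_mono)
    fix x v assume x: "x \<in> PiE {..<u} (\<lambda>_. V)" and v: "v \<in> V"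
    have w: "0 \<le> prefix_weight p u x * p v * survival a u x"
      using prefix_weight_nonneg[OF p0 x] p0[OF v] survival_nonneg[OF a(2)] by simp
    show "prefix_weight p u x * p v * survival a u x * (of_bool (running_max u x = c) * of_bool (v < c))
        \<le> prefix_weight p u x * p v * survival a u x * (1 - record_accept a u (x(u:=v)))
           * of_bool (max (running_max u x) v = c)"
    proof (cases "running_max u x = c \<and> v < c")
      case True
      then have "record_accept a u (x(u:=v)) = 0"
        using running_max_le_of_record_accept V1[OF v] by fastforce
      then show ?thesis using True by simp
    next
      case False
      then show ?thesis
        using w record_accept_le_1[OF a(2)] by (auto intro!: mult_nonneg_nonneg)
    qed
  qed
  also have "\<dots> = alive V p a (Suc u) c" by (rule alive_Suc_expand[OF fin a(1), symmetric])
  finally show ?thesis .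
qed

lemma alive_Suc:
  assumes fin: "finite V" and V1: "\<And>v. v \<in> V \<Longrightarrow> 1 \<le> v" and a: "non_anticipating a"
  shows "alive V p a (Suc u) c = (\<Sum>x\<in>PiE {..<u} (\<lambda>_. V). prefix_weight p u x * survival a u x *
            (\<Sum>v\<in>V. p v * of_bool (max (running_max u x) v = c))) - stop_at V p a u c"
proof -
  have "prefix_weight p u x * p v * survival a u x * (1 - record_accept a u (x(u:=v)))
          * of_bool (max (running_max u x) v = c)
      = prefix_weight p u x * survival a u x * (p v * of_bool (max (running_max u x) v = c))
          - prefix_weight p u x * p v * survival a u x * record_accept a u (x(u:=v)) * of_bool (v = c)"
    if "v \<in> V" for x v
  proof (cases "record_accept a u (x(u:=v)) = 0")
    case False
    then have "max (running_max u x) v = v"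
      using running_max_le_of_record_accept V1[OF that] by (simp add: max_absorb2)
    then show ?thesis by (simp add: algebra_simps)
  qed simp
  then show ?thesis
    unfolding alive_Suc_expand[OF fin a] stop_at_eq[OF fin a]
    by (simp add: sum_subtractf sum_distrib_left)
qed

section \<open>Priors supported on {1..K}\<close>

lemma prior_uniform_measure:
  assumes "prior F" "A \<in> sets borel" "0 < measure F A"
  shows "prior (uniform_measure F A)"
proof -
  interpret prob_space F using assms(1) by (simp add: prior_def)
  have sets_F: "sets F = sets borel" using assms(1) by (simp add: prior_def)
  have A: "emeasure F A \<noteq> 0" "emeasure F A < \<infinity>"
    using assms(3) by (auto simp: emeasure_eq_measure)
  have "prob_space (uniform_measure F A)"
    using A by (intro prob_space_uniform_measure) auto
  moreover have "AE x in uniform_measure F A. 0 \<le> x"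
    using assms(1) A by (subst AE_uniform_measure) (auto simp: prior_def elim: AE_mp)
  ultimately show ?thesis using sets_F by (simp add: prior_def)
qed

locale finite_support_prior =
  fixes Ft :: "real measure" and K :: nat
  assumes prior: "prior Ft" and support: "measure Ft (real ` {1..K}) = 1"
begin

abbreviation V :: "real set" where "V \<equiv> real ` {1..K}"

definition mass :: "real \<Rightarrow> real" where "mass v = measure Ft {v}"

lemma prob_space_Ft: "prob_space Ft" and sets_Ft: "sets Ft = sets borel"
  using prior by (auto simp: prior_def)

sublocale prob_space Ft by (rule prob_space_Ft)

lemma finite_sets_Ft: "finite B \<Longrightarrow> B \<in> sets Ft"
  using sets_Ft by (simp add: finite_imp_closed)

lemma finite_V: "finite V"
  by simp

lemma K_pos: "1 \<le> K"
  using support by (cases K) auto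

lemma one_in_V: "1 \<in> V"
  using K_pos by force

lemma V_ge_1: "v \<in> V \<Longrightarrow> 1 \<le> v"
  by auto

lemma mass_nonneg: "0 \<le> mass v"
  unfolding mass_def by simp

lemma pmfP_eq_mass: "pmfP Ft l = mass (real l)"
  unfolding pmfP_def mass_def ..

lemma measure_Int_support:
  assumes "B \<in> sets Ft"
  shows "measure Ft B = measure Ft (B \<inter> V)"
proof -
  have V_sets: "V \<in> sets Ft" by (rule finite_sets_Ft) simp
  have "measure Ft (B - V) \<le> measure Ft (space Ft - V)"
    using assms V_sets sets.sets_into_space[OF assms] by (intro finite_measure_mono) auto
  moreover have "measure Ft (space Ft - V) = 0" using prob_compl[OF V_sets] support by simp
  moreover have "measure Ft B = measure Ft (B \<inter> V) + measure Ft (B - V)"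
    using assms V_sets by (subst finite_measure_Union[symmetric]) (auto intro!: arg_cong[where f="measure Ft"])
  ultimately show ?thesis using measure_nonneg[of Ft "B - V"] by linarith
qed

lemma cdfP_eq_sum: "cdfP Ft l = (\<Sum>v\<in>V. mass v * of_bool (v \<le> real l))"
proof -
  have "cdfP Ft l = measure Ft {v\<in>V. v \<le> real l}"
    unfolding cdfP_def using sets_Ft by (subst measure_Int_support) (auto intro: arg_cong[where f="measure Ft"])
  also have "\<dots> = (\<Sum>v\<in>{v\<in>V. v \<le> real l}. mass v)"
    unfolding mass_def by (rule finite_measure_eq_sum_singleton) (auto intro: finite_sets_Ft)
  finally show ?thesis by (simp add: sum_mult_of_bool_eq Int_def conj_commute)
qed

lemma sum_mass_less: "1 \<le> l \<Longrightarrow> (\<Sum>v\<in>V. mass v * of_bool (v < real l)) = cdfP Ft (l - 1)"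
  unfolding cdfP_eq_sum by (intro sum.cong refl) auto

lemma cdfP_K: "cdfP Ft K = 1"
proof -
  have "1 = measure Ft V" using support ..
  also have "\<dots> \<le> cdfP Ft K"
    unfolding cdfP_def by (intro finite_measure_mono) (auto simp: sets_Ft)
  finally show ?thesis unfolding cdfP_def using prob_le_1 by (intro antisym) auto
qed

lemma cdfP_pos: "0 < pmfP Ft 1 \<Longrightarrow> 1 \<le> k \<Longrightarrow> 0 < cdfP Ft k"
  unfolding pmfP_def cdfP_def
  by (rule less_le_trans, assumption, intro finite_measure_mono) (auto simp: sets_Ft)

lemma running_max_cases:
  assumes "x \<in> PiE {..<t} (\<lambda>_. V)"
  obtains j where "j \<in> {1..K}" "running_max t x = real j"
proof -
  have "running_max t x \<in> V" using running_max_in[of t x] one_in_V assms by (auto simp: PiE_iff)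
  then show ?thesis using that by blast
qed

lemma Delta_eq_sum:
  assumes l: "l \<in> {1..K}"
  shows "Delta Ft t l = (\<Sum>x\<in>PiE {..<t} (\<lambda>_. V). prefix_weight mass t x * of_bool (running_max t x = real l))"
proof (cases "t = 0")
  case True
  then show ?thesis by (simp add: Delta_def prefix_weight_def running_max_def PiE_empty_domain)
next
  case False
  have "of_bool (running_max t x = real l)
      = of_bool (\<forall>i<t. x i \<le> real l) - (of_bool (\<forall>i<t. x i \<le> real (l - 1)) :: real)"
    if x: "x \<in> PiE {..<t} (\<lambda>_. V)" for x
  proof -
    obtain j where j: "j \<in> {1..K}" "running_max t x = real j" using running_max_cases[OF x] .
    have "x 0 \<in> V" using x False by (auto simp: PiE_iff)
    then have "1 \<le> x 0" by (rule V_ge_1)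
    then have "(\<forall>i<t. x i \<le> c) \<longleftrightarrow> running_max t x \<le> c" for c
      using False by (auto simp: running_max_le_iff)
    then show ?thesis using j l by auto
  qed
  then have "(\<Sum>x\<in>PiE {..<t} (\<lambda>_. V). prefix_weight mass t x * of_bool (running_max t x = real l))
      = (\<Sum>x\<in>PiE {..<t} (\<lambda>_. V). prefix_weight mass t x * of_bool (\<forall>i<t. x i \<le> real l))
        - (\<Sum>x\<in>PiE {..<t} (\<lambda>_. V). prefix_weight mass t x * of_bool (\<forall>i<t. x i \<le> real (l - 1)))"
    by (simp add: sum_subtractf right_diff_distrib)
  also have "\<dots> = cdfP Ft l ^ t - cdfP Ft (l - 1) ^ t"
    by (simp only: sum_prefix_weight_all[OF finite_V, where P = "\<lambda>v. v \<le> real l"]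
        sum_prefix_weight_all[OF finite_V, where P = "\<lambda>v. v \<le> real (l - 1)"] cdfP_eq_sum)
  finally show ?thesis using False by (simp add: Delta_def)
qed

lemma alive_le_Delta:
  assumes "unit_valued a" "l \<in> {1..K}"
  shows "alive V mass a t (real l) \<le> Delta Ft t l"
  unfolding alive_def Delta_eq_sum[OF assms(2)]
proof (rule sum_mono)
  fix x assume "x \<in> PiE {..<t} (\<lambda>_. V)"
  then have "0 \<le> prefix_weight mass t x" by (rule prefix_weight_nonneg[OF mass_nonneg])
  then show "prefix_weight mass t x * survival a t x * of_bool (running_max t x = real l)
           \<le> prefix_weight mass t x * of_bool (running_max t x = real l)"
    using survival_le_1[OF assms(1)] by (simp add: mult_left_le)
qed

lemma alive_Suc_eq:
  assumes a: "non_anticipating a" and l: "l \<in> {1..K}"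
  shows "alive V mass a (Suc u) (real l) = alive V mass a u (real l) * cdfP Ft (l - 1)
      + pmfP Ft l * (\<Sum>m\<in>{1..l}. alive V mass a u (real m)) - stop_at V mass a u (real l)"
proof -
  have "(\<Sum>v\<in>V. mass v * of_bool (max (running_max u x) v = real l))
      = of_bool (running_max u x = real l) * cdfP Ft (l - 1)
        + pmfP Ft l * (\<Sum>m\<in>{1..l}. of_bool (running_max u x = real m))"
    if x: "x \<in> PiE {..<u} (\<lambda>_. V)" for x
  proof -
    obtain j where j: "j \<in> {1..K}" "running_max u x = real j" using running_max_cases[OF x] .
    have "(\<Sum>m\<in>{1..l}. of_bool (real j = real m)) = (of_bool (j \<le> l) :: real)"
      using j by (simp add: of_bool_def)
    then show ?thesis
      unfolding sum_of_bool_max_eq[OF finite_V] j(2)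
      using l sum_mass_less[of l] by (simp add: pmfP_eq_mass)
  qed
  then have "(\<Sum>x\<in>PiE {..<u} (\<lambda>_. V). prefix_weight mass u x * survival a u x
              * (\<Sum>v\<in>V. mass v * of_bool (max (running_max u x) v = real l)))
      = (\<Sum>x\<in>PiE {..<u} (\<lambda>_. V). prefix_weight mass u x * survival a u x * of_bool (running_max u x = real l)
              * cdfP Ft (l - 1) + pmfP Ft l * (\<Sum>m\<in>{1..l}. prefix_weight mass u x * survival a u x
              * of_bool (running_max u x = real m)))"
    by (intro sum.cong refl) (simp add: sum_distrib_left algebra_simps split del: split_of_bool)
  also have "\<dots> = alive V mass a u (real l) * cdfP Ft (l - 1) + pmfP Ft l * (\<Sum>m\<in>{1..l}. alive V mass a u (real m))"
    unfolding alive_def by (simp add: sum.distrib sum_distrib_left sum_distrib_right) (rule sum.swap)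
  finally show ?thesis by (simp only: alive_Suc[OF finite_V V_ge_1 a])
qed

text \<open>The paper's variable y; its value where Delta vanishes is irrelevant.\<close>
definition occupancy :: "(nat \<Rightarrow> (nat \<Rightarrow> real) \<Rightarrow> real) \<Rightarrow> nat \<Rightarrow> nat \<Rightarrow> real" where
  "occupancy a t l = (if t = 0 \<or> Delta Ft t l = 0 then 1 else alive V mass a t (real l) / Delta Ft t l)"

definition acceptance :: "(nat \<Rightarrow> nat \<Rightarrow> real) \<Rightarrow> nat \<Rightarrow> nat \<Rightarrow> real" where
  "acceptance y t l = (\<Sum>m\<in>{1..l}. Delta Ft (t - 1) m * pmfP Ft l * y (t - 1) m)
     + Delta Ft (t - 1) l * cdfP Ft (l - 1) * y (t - 1) l - Delta Ft t l * y t l"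

lemma Delta_mult_occupancy:
  assumes a: "unit_valued a" and l: "l \<in> {1..K}"
  shows "Delta Ft t l * occupancy a t l = alive V mass a t (real l)"
proof (cases "t = 0")
  case True
  then show ?thesis by (simp add: occupancy_def Delta_def alive_0)
next
  case False
  then show ?thesis
    using alive_le_Delta[OF a l, of t] alive_nonneg[where V = V and p = mass and t = t and c = "real l", OF a mass_nonneg]
    by (auto simp: occupancy_def)
qed

lemma occupancy_bounds:
  assumes a: "unit_valued a" and l: "l \<in> {1..K}"
  shows "0 \<le> occupancy a t l \<and> occupancy a t l \<le> 1"
  using alive_le_Delta[OF a l, of t] alive_nonneg[where V = V and p = mass and t = t and c = "real l", OF a mass_nonneg]
  by (auto simp: occupancy_def divide_le_eq_1)

lemma occupancy_step_ge:
  assumes a: "unit_valued a" "non_anticipating a" and l: "l \<in> {1..K}" and t: "1 \<le> t"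
  shows "Delta Ft (t - 1) l * cdfP Ft (l - 1) * occupancy a (t - 1) l \<le> Delta Ft t l * occupancy a t l"
proof -
  have "alive V mass a (t - 1) (real l) * cdfP Ft (l - 1) \<le> alive V mass a (Suc (t - 1)) (real l)"
    using alive_Suc_ge[where p = mass and u = "t - 1" and c = "real l", OF finite_V V_ge_1 a(2,1) mass_nonneg]
      sum_mass_less[of l] l by simp
  then show ?thesis
    using t by (simp add: mult.commute mult.left_commute Delta_mult_occupancy[OF a(1) l])
qed

lemma acceptance_occupancy:
  assumes a: "unit_valued a" "non_anticipating a" and l: "l \<in> {1..K}" and t: "1 \<le> t"
  shows "acceptance (occupancy a) t l = stop_at V mass a (t - 1) (real l)"
proof -
  have "(\<Sum>m\<in>{1..l}. Delta Ft (t - 1) m * pmfP Ft l * occupancy a (t - 1) m)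
      = pmfP Ft l * (\<Sum>m\<in>{1..l}. alive V mass a (t - 1) (real m))"
    unfolding sum_distrib_left using l
    by (intro sum.cong refl) (simp add: Delta_mult_occupancy[OF a(1)] mult_ac)
  moreover have "alive V mass a t (real l) = alive V mass a (Suc (t - 1)) (real l)"
    using t by simp
  ultimately show ?thesis
    unfolding acceptance_def alive_Suc_eq[OF a(2) l]
    by (simp add: Delta_mult_occupancy[OF a(1) l] mult_ac)
qed

lemma acceptance_nonneg:
  assumes "unit_valued a" "non_anticipating a" "l \<in> {1..K}" "1 \<le> t"
  shows "0 \<le> acceptance (occupancy a) t l"
  unfolding acceptance_occupancy[OF assms] using assms(1) mass_nonneg by (rule stop_at_nonneg)

section \<open>Priors conditioned on small values\<close>

abbreviation cond_prior :: "nat \<Rightarrow> real measure" where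
  "cond_prior k \<equiv> uniform_measure Ft {..real k}"

definition cond_mass :: "nat \<Rightarrow> real \<Rightarrow> real" where
  "cond_mass k v = mass v * of_bool (v \<le> real k) / cdfP Ft k"

lemma prior_cond_prior: "0 < cdfP Ft k \<Longrightarrow> prior (cond_prior k)"
  unfolding cdfP_def by (intro prior_uniform_measure[OF prior]) auto

lemma measure_cond_prior:
  assumes "0 < cdfP Ft k" "B \<in> sets borel"
  shows "measure (cond_prior k) B = measure Ft ({..real k} \<inter> B) / cdfP Ft k"
  using assms by (subst measure_uniform_measure) (auto simp: cdfP_def emeasure_eq_measure sets_Ft)

lemma cond_prior_support: "0 < cdfP Ft k \<Longrightarrow> measure (cond_prior k) V = 1"
  using measure_Int_support[of "{..real k}"]
  by (simp add: measure_cond_prior finite_imp_closed cdfP_def sets_Ft Int_commute)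

lemma measure_cond_prior_singleton: "0 < cdfP Ft k \<Longrightarrow> measure (cond_prior k) {v} = cond_mass k v"
  by (simp add: measure_cond_prior cond_mass_def mass_def)

text \<open>Under the conditioned prior, a run accepting the record j at step t saw only values
  at most j, so its weight and the chance that j stays maximal are rescaled by powers of
  F(k) whose exponents add up to n.\<close>
lemma record_term_cond_eq:
  assumes x: "x \<in> PiE {..<Suc t} (\<lambda>_. V)" and j: "x t = real j" "j \<in> {1..K}" and t: "t < n"
    and ck: "0 < cdfP Ft k"
  shows "prefix_weight (cond_mass k) (Suc t) x * (survival a t x * record_accept a t x)
           * (\<Sum>v\<in>V. cond_mass k v * of_bool (v \<le> x t)) ^ (n - Suc t)
    = prefix_weight mass (Suc t) x * (survival a t x * record_accept a t x)
           * (if j \<le> k then cdfP Ft j ^ (n - Suc t) / cdfP Ft k ^ n else 0)"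
proof (cases "record_accept a t x = 0")
  case False
  then have is_record: "\<forall>i<t. x i \<le> x t" by (rule record_accept_nonzero_imp_record)
  show ?thesis
  proof (cases "j \<le> k")
    case True
    then have "\<forall>i<Suc t. x i \<le> real k" using is_record j by (auto simp: less_Suc_eq)
    then have "prefix_weight (cond_mass k) (Suc t) x = (\<Prod>i<Suc t. mass (x i) / cdfP Ft k)"
      unfolding prefix_weight_def cond_mass_def by (intro prod.cong refl) auto
    then have weight: "prefix_weight (cond_mass k) (Suc t) x = prefix_weight mass (Suc t) x / cdfP Ft k ^ Suc t"
      unfolding prefix_weight_def by (simp add: prod_dividef)
    have "(\<Sum>v\<in>V. cond_mass k v * of_bool (v \<le> x t)) = (\<Sum>v\<in>V. mass v * of_bool (v \<le> x t) / cdfP Ft k)"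
      unfolding cond_mass_def using j True by (intro sum.cong refl) auto
    then have tail: "(\<Sum>v\<in>V. cond_mass k v * of_bool (v \<le> x t)) = cdfP Ft j / cdfP Ft k"
      unfolding cdfP_eq_sum j(1) by (simp add: sum_divide_distrib)
    have "Suc t + (n - Suc t) = n" using t by simp
    then have "cdfP Ft k ^ Suc t * cdfP Ft k ^ (n - Suc t) = cdfP Ft k ^ n"
      by (metis power_add)
    then show ?thesis unfolding weight tail using True ck
      by (simp add: power_divide field_simps)
  next
    case False
    then have "cond_mass k (x t) = 0" using j unfolding cond_mass_def by auto
    then have "prefix_weight (cond_mass k) (Suc t) x = 0" unfolding prefix_weight_def by simp
    then show ?thesis using False by simp
  qed
qed simp

lemma record_step_cond_eq:
  assumes t: "t < n" and ck: "0 < cdfP Ft k"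
  shows "(\<Sum>x\<in>PiE {..<Suc t} (\<lambda>_. V). prefix_weight (cond_mass k) (Suc t) x
            * (survival a t x * record_accept a t x) * (\<Sum>v\<in>V. cond_mass k v * of_bool (v \<le> x t)) ^ (n - Suc t))
       = (\<Sum>l\<in>{1..k}. cdfP Ft l ^ (n - Suc t) / cdfP Ft k ^ n * stop_at V mass a t (real l))"
proof -
  have "(\<Sum>l\<in>{1..k}. cdfP Ft l ^ (n - Suc t) / cdfP Ft k ^ n * stop_at V mass a t (real l))
    = (\<Sum>x\<in>PiE {..<Suc t} (\<lambda>_. V). prefix_weight mass (Suc t) x * (survival a t x * record_accept a t x)
         * (\<Sum>l\<in>{1..k}. of_bool (x t = real l) * (cdfP Ft l ^ (n - Suc t) / cdfP Ft k ^ n)))"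
    unfolding stop_at_def sum_distrib_left by (subst sum.swap) (simp add: mult_ac)
  also have "\<dots> = (\<Sum>x\<in>PiE {..<Suc t} (\<lambda>_. V). prefix_weight (cond_mass k) (Suc t) x
            * (survival a t x * record_accept a t x) * (\<Sum>v\<in>V. cond_mass k v * of_bool (v \<le> x t)) ^ (n - Suc t))"
  proof (rule sum.cong[OF refl])
    fix x assume x: "x \<in> PiE {..<Suc t} (\<lambda>_. V)"
    then have "x t \<in> V" by (auto simp: PiE_iff)
    then obtain j where j: "j \<in> {1..K}" "x t = real j" by blast
    have "(\<Sum>l\<in>{1..k}. of_bool (real j = real l) * (cdfP Ft l ^ (n - Suc t) / cdfP Ft k ^ n))
        = (\<Sum>l\<in>{1..k}. if j = l then cdfP Ft l ^ (n - Suc t) / cdfP Ft k ^ n else 0)"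
      by (intro sum.cong refl) auto
    also have "\<dots> = (if j \<le> k then cdfP Ft j ^ (n - Suc t) / cdfP Ft k ^ n else 0)"
      using j(1) by simp
    finally have pick: "(\<Sum>l\<in>{1..k}. of_bool (real j = real l) * (cdfP Ft l ^ (n - Suc t) / cdfP Ft k ^ n))
        = (if j \<le> k then cdfP Ft j ^ (n - Suc t) / cdfP Ft k ^ n else 0)" .
    show "prefix_weight mass (Suc t) x * (survival a t x * record_accept a t x)
         * (\<Sum>l\<in>{1..k}. of_bool (x t = real l) * (cdfP Ft l ^ (n - Suc t) / cdfP Ft k ^ n))
      = prefix_weight (cond_mass k) (Suc t) x * (survival a t x * record_accept a t x)
         * (\<Sum>v\<in>V. cond_mass k v * of_bool (v \<le> x t)) ^ (n - Suc t)"
      unfolding j(2) pick record_term_cond_eq[OF x j(2,1) t ck, unfolded j(2)] by (rule refl)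
  qed
  finally show ?thesis ..
qed

lemma record_sum_cond_eq:
  assumes ck: "0 < cdfP Ft k"
  shows "(\<Sum>t<n. \<Sum>x\<in>PiE {..<Suc t} (\<lambda>_. V). prefix_weight (cond_mass k) (Suc t) x
            * (survival a t x * record_accept a t x) * (\<Sum>v\<in>V. cond_mass k v * of_bool (v \<le> x t)) ^ (n - Suc t))
   = (\<Sum>t\<in>{1..n}. \<Sum>l\<in>{1..k}. cdfP Ft l ^ (n - t) / cdfP Ft k ^ n * stop_at V mass a (t - 1) (real l))"
proof -
  have shift: "(\<Sum>t\<in>{1..n}. f t) = (\<Sum>t<n. f (Suc t))" for f :: "nat \<Rightarrow> real"
    by (simp add: sum.atLeast1_atMost_eq)
  show ?thesis
    unfolding shift diff_Suc_1 by (intro sum.cong refl record_step_cond_eq[OF _ ck]) simp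
qed

lemma success_prob_cond_prior_le:
  assumes alg: "online_alg n A" and ck: "0 < cdfP Ft k"
  shows "success_prob n A Ft (cond_prior k)
    \<le> (\<Sum>t\<in>{1..n}. \<Sum>l\<in>{1..k}. cdfP Ft l ^ (n - t) / cdfP Ft k ^ n * stop_at V mass (A Ft) (t - 1) (real l))"
proof -
  have "prob_space (cond_prior k)" using prior_cond_prior[OF ck] by (simp add: prior_def)
  then have "success_prob n A Ft (cond_prior k)
    \<le> (\<Sum>t<n. \<Sum>x\<in>PiE {..<Suc t} (\<lambda>_. V). prefix_weight (cond_mass k) (Suc t) x
          * (survival (A Ft) t x * record_accept (A Ft) t x) * (\<Sum>v\<in>V. cond_mass k v * of_bool (v \<le> x t)) ^ (n - Suc t))"
    by (intro success_prob_le_record_sum cond_prior_support[OF ck] finite_V measure_cond_prior_singleton[OF ck]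
        online_algD[OF alg]) (simp_all add: sets_Ft)
  also have "\<dots> = (\<Sum>t\<in>{1..n}. \<Sum>l\<in>{1..k}. cdfP Ft l ^ (n - t) / cdfP Ft k ^ n * stop_at V mass (A Ft) (t - 1) (real l))"
    by (rule record_sum_cond_eq[OF ck])
  finally show ?thesis .
qed

lemma success_prob_le:
  assumes alg: "online_alg n A"
  shows "success_prob n A Ft Ft
    \<le> (\<Sum>t\<in>{1..n}. \<Sum>l\<in>{1..K}. cdfP Ft l ^ (n - t) * stop_at V mass (A Ft) (t - 1) (real l))"
proof -
  have "success_prob n A Ft Ft
    \<le> (\<Sum>t<n. \<Sum>x\<in>PiE {..<Suc t} (\<lambda>_. V). prefix_weight (cond_mass K) (Suc t) x
          * (survival (A Ft) t x * record_accept (A Ft) t x) * (\<Sum>v\<in>V. cond_mass K v * of_bool (v \<le> x t)) ^ (n - Suc t))"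
    by (intro success_prob_le_record_sum prob_space_Ft sets_Ft support finite_V online_algD[OF alg])
       (auto simp: cond_mass_def mass_def cdfP_K)
  also have "\<dots> = (\<Sum>t\<in>{1..n}. \<Sum>l\<in>{1..K}. cdfP Ft l ^ (n - t) / cdfP Ft K ^ n * stop_at V mass (A Ft) (t - 1) (real l))"
    by (rule record_sum_cond_eq) (simp add: cdfP_K)
  finally show ?thesis by (simp add: cdfP_K)
qed

lemma consistency_constraint:
  assumes alg: "online_alg n A" and cons: "consistent n A \<alpha>"
  shows "\<alpha> \<le> (\<Sum>t\<in>{1..n}. \<Sum>l\<in>{1..K}. cdfP Ft l ^ (n - t) * acceptance (occupancy (A Ft)) t l)"
proof -
  have "\<alpha> \<le> success_prob n A Ft Ft" using cons prior by (simp add: consistent_def)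
  also have "\<dots> \<le> (\<Sum>t\<in>{1..n}. \<Sum>l\<in>{1..K}. cdfP Ft l ^ (n - t) * stop_at V mass (A Ft) (t - 1) (real l))"
    by (rule success_prob_le[OF alg])
  also have "\<dots> = (\<Sum>t\<in>{1..n}. \<Sum>l\<in>{1..K}. cdfP Ft l ^ (n - t) * acceptance (occupancy (A Ft)) t l)"
    by (intro sum.cong refl) (simp add: acceptance_occupancy online_algD[OF alg])
  finally show ?thesis .
qed

lemma robustness_constraint:
  assumes alg: "online_alg n A" and rob: "robust n A \<beta>" and f1: "0 < pmfP Ft 1" and k: "k \<in> {1..K}"
  shows "\<beta> \<le> (\<Sum>t\<in>{1..n}. \<Sum>l\<in>{1..k}. cdfP Ft l ^ (n - t) / cdfP Ft k ^ n * acceptance (occupancy (A Ft)) t l)"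
proof -
  have ck: "0 < cdfP Ft k" using cdfP_pos[OF f1] k by simp
  have "\<beta> \<le> success_prob n A Ft (cond_prior k)"
    using rob prior prior_cond_prior[OF ck] unfolding robust_def by blast
  also have "\<dots> \<le> (\<Sum>t\<in>{1..n}. \<Sum>l\<in>{1..k}. cdfP Ft l ^ (n - t) / cdfP Ft k ^ n * stop_at V mass (A Ft) (t - 1) (real l))"
    by (rule success_prob_cond_prior_le[OF alg ck])
  also have "\<dots> = (\<Sum>t\<in>{1..n}. \<Sum>l\<in>{1..k}. cdfP Ft l ^ (n - t) / cdfP Ft k ^ n * acceptance (occupancy (A Ft)) t l)"
    using k by (intro sum.cong refl) (simp add: acceptance_occupancy online_algD[OF alg])
  finally show ?thesis .
qed

end

theorem mainTheorem3:
  fixes n K :: nat and A :: "real measure \<Rightarrow> nat \<Rightarrow> (nat \<Rightarrow> real) \<Rightarrow> real"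
    and \<alpha> \<beta> :: real and Ft :: "real measure"
  assumes alg: "online_alg n A"
    and cons: "consistent n A \<alpha>"
    and rob: "robust n A \<beta>"
    and pr: "prior Ft"
    and supp: "measure Ft (real ` {1..K}) = 1"
    and f1: "pmfP Ft 1 > 0"
  shows "\<exists>y :: nat \<Rightarrow> nat \<Rightarrow> real.
     (\<forall>l\<in>{1..K}. y 0 l = 1) \<and>
     (\<forall>t\<in>{1..n}. \<forall>l\<in>{1..K}. 0 \<le> y t l \<and> y t l \<le> 1) \<and>
     (\<forall>t\<in>{1..n}. \<forall>l\<in>{1..K}.
        Delta Ft t l * y t l - Delta Ft (t - 1) l * cdfP Ft (l - 1) * y (t - 1) l \<ge> 0) \<and>
     (\<forall>t\<in>{1..n}. \<forall>l\<in>{1..K}.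
        Delta Ft t l * y t l - Delta Ft (t - 1) l * cdfP Ft (l - 1) * y (t - 1) l
          \<le> (\<Sum>m\<in>{1..l}. Delta Ft (t - 1) m * pmfP Ft l * y (t - 1) m)) \<and>
     (\<Sum>t\<in>{1..n}. \<Sum>l\<in>{1..K}. cdfP Ft l ^ (n - t) *
        ((\<Sum>m\<in>{1..l}. Delta Ft (t - 1) m * pmfP Ft l * y (t - 1) m)
         + Delta Ft (t - 1) l * cdfP Ft (l - 1) * y (t - 1) l - Delta Ft t l * y t l)) \<ge> \<alpha> \<and>
     (\<forall>k\<in>{1..K}. (\<Sum>t\<in>{1..n}. \<Sum>l\<in>{1..k}. cdfP Ft l ^ (n - t) / cdfP Ft k ^ n *
        ((\<Sum>m\<in>{1..l}. Delta Ft (t - 1) m * pmfP Ft l * y (t - 1) m)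
         + Delta Ft (t - 1) l * cdfP Ft (l - 1) * y (t - 1) l - Delta Ft t l * y t l)) \<ge> \<beta>)"
proof -
  interpret finite_support_prior Ft K using pr supp by unfold_locales
  note a = online_algD[OF alg, where Ft = Ft]
  show ?thesis
  proof (intro exI[of _ "occupancy (A Ft)"] conjI ballI, fold acceptance_def)
    fix l show "occupancy (A Ft) 0 l = 1" by (simp add: occupancy_def)
  next
    fix t l assume "l \<in> {1..K}"
    then show "0 \<le> occupancy (A Ft) t l" and "occupancy (A Ft) t l \<le> 1"
      using occupancy_bounds[OF a(1)] by blast+
  next
    fix t l assume "t \<in> {1..n}" and l: "l \<in> {1..K}"
    then have t: "1 \<le> t" by simp
    show "Delta Ft t l * occupancy (A Ft) t l
             - Delta Ft (t - 1) l * cdfP Ft (l - 1) * occupancy (A Ft) (t - 1) l \<ge> 0"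
      using occupancy_step_ge[OF a(1,2) l t] by simp
    show "Delta Ft t l * occupancy (A Ft) t l
             - Delta Ft (t - 1) l * cdfP Ft (l - 1) * occupancy (A Ft) (t - 1) l
           \<le> (\<Sum>m\<in>{1..l}. Delta Ft (t - 1) m * pmfP Ft l * occupancy (A Ft) (t - 1) m)"
      using acceptance_nonneg[OF a(1,2) l t] unfolding acceptance_def by linarith
  qed (fact consistency_constraint[OF alg cons], fact robustness_constraint[OF alg rob f1])
qed

end
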